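(* Suppose the original system $x^+=f(x,u)$ is cost controllable on a set $S\subseteq\mathbb{R}^n$ (containing $0$ in its interior) with sequence $(B_N)_{N\in\mathbb{N}_0}$. Let $\bar N\in\mathbb{N}$ and suppose Assumption (EB) and Assumption (L) hold on a set $\Omega$ such that $S\oplus\mathcal{B}_{r(\bar N)\eta^\varepsilon}(0)\subseteq\Omega$ for all $\varepsilon\in(0,\bar\varepsilon]$, where $r(\bar N):=\sum_{i=0}^{\bar N-1}\bar L^i$. Then there exists, for every $\varepsilon\in(0,\bar\varepsilon]$, a monotonically increasing finite sequence $(B_N^\varepsilon)_{N\in[1:\bar N]}$ such that for each pair $(\hat x,N)\in S\times[1:\bar N]$ there exists $\mathbf{u}=\mathbf{u}(\hat x)\in\mathcal{U}_N$ with $$V_N^\varepsilon(\hat x)\le J_N^\varepsilon(\hat x,\mathbf{u})\le B_N^\varepsilon\,\ell^\star(\hat x),$$ and $\lim_{\varepsilon\searrow 0}B_N^\varepsilon=B_N$ for every $N\in[1:\bar N]$. The same statement holds with the roles of $f$ and $f^\varepsilon$ interchanged: if the surrogate $f^\varepsilon$ satisfies the growth bound $V^\varepsilon_N(\hat x)\le J^\varepsilon_N(\hat x,\mathbf u)\le B_N\ell^\star(\hat x)$ (with a control sequence keeping the surrogate trajectory in $S$), then the original dynamics $f$ satisfies a growth bound $J_N(\hat x,\mathbf u)\le B^\varepsilon_N\ell^\star(\hat x)$ on $S$ for all $N\in[1:\bar N]$ with $B_N^\varepsilon\to B_N$ as $\varepsilon\searrow0$.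
   Context: Let $\mathbb{U}\subset\mathbb{R}^m$ be convex and compact with $0$ in its interior. The original system is $x^+=f(x,u)$ with $f:\mathbb{R}^n\times\mathbb{U}\to\mathbb{R}^n$ continuous and $f(0,0)=0$. A family of surrogate models $x^+=f^\varepsilon(x,u)$, $f^\varepsilon:\mathbb{R}^n\times\mathbb{U}\to\mathbb{R}^n$, is given for $\varepsilon\in(0,\bar\varepsilon]$, $\bar\varepsilon>0$. Stage cost: $\ell(x,u)=x^\top Qx+u^\top Ru$ with $Q\in\mathbb{R}^{n\times n}$, $R\in\mathbb{R}^{m\times m}$ symmetric positive definite; $\ell^\star(x):=\min_{u\in\mathbb U}\ell(x,u)=\|x\|_Q^2=x^\top Qx$. For $N\in\mathbb{N}\cup\{\infty\}$, $\mathcal{U}_N$ is the set of sequences $\mathbf u=(u(k))_{k=0}^{N-1}\subset\mathbb{U}$ (admissible controls). For $\hat x\in\mathbb{R}^n$ and $\mathbf u\in\mathcal U_N$, $x_{\mathbf u}(0)=\hat x$, $x_{\mathbf u}(k+1)=f(x_{\mathbf u}(k),u(k))$, and $x^\varepsilon_{\mathbf u}(0)=\hat x$, $x^\varepsilon_{\mathbf u}(k+1)=f^\varepsilon(x^\varepsilon_{\mathbf u}(k),u(k))$. Costs: $J_N(\hat x,\mathbf u)=\sum_{k=0}^{N-1}\ell(x_{\mathbf u}(k),u(k))$, $J^\varepsilon_N(\hat x,\mathbf u)=\sum_{k=0}^{N-1}\ell(x^\varepsilon_{\mathbf u}(k),u(k))$; value functions $V_N(\hat x)=\inf_{\mathbf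 u\in\mathcal U_N}J_N(\hat x,\mathbf u)$, $V^\varepsilon_N(\hat x)=\inf_{\mathbf u\in\mathcal U_N}J^\varepsilon_N(\hat x,\mathbf u)$. Assumption (EB) on a set $\Omega\subseteq\mathbb{R}^n$ containing $0$ in its interior: there are constants $c_x^\varepsilon,c_u^\varepsilon,\eta^\varepsilon\ge0$ with $\lim_{\varepsilon\searrow0}\max\{c_x^\varepsilon,c_u^\varepsilon,\eta^\varepsilon\}=0$ such that for all $\varepsilon\in(0,\bar\varepsilon]$, $x\in\Omega$, $u\in\mathbb U$: $\|f(x,u)-f^\varepsilon(x,u)\|\le c_x^\varepsilon\|x\|+c_u^\varepsilon\|u\|$ (proportional bound) and $\|f(x,u)-f^\varepsilon(x,u)\|\le\eta^\varepsilon$ (uniform bound). Assumption (L) on $\Omega$: there are constants $L_f\ge0$ and $\bar L\ge0$ such that for all $x,y\in\Omega$, $u\in\mathbb U$, $\varepsilon\in(0,\bar\varepsilon]$: $\|f(x,u)-f(y,u)\|\le L_f\|x-y\|$ and $\|f^\varepsilon(x,u)-f^\varepsilon(y,u)\|\le L_{f^\varepsilon}\|x-y\|$ with $L_{f^\varepsilon}\le\bar L$. Cost controllability on $S$: there is a monotonically increasing bounded sequence $(B_N)_{N\in\mathbb N_0}$ such that for every $\hat x\in S$ there is $\mathbf u=\mathbf u(\hat x)\in\mathcal U_\infty$ with $x_{\mathbf u}(k)\in S$ for all $k\ge0$ and $V_N(\hat x)\le J_N(\hat x,\mathbf u)\le B_N\ell^\star(\hat x)$ for all $N\in\mathbb N$.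 $\oplus$ denotes Minkowski sum and $\mathcal B_r(0)$ the closed Euclidean ball of radius $r$. *)

theory Defs
  imports "HOL-Analysis.Analysis"
begin

definition pos_def_sym :: "real^'k^'k \<Rightarrow> bool" where
  "pos_def_sym A \<longleftrightarrow> transpose A = A \<and> (\<forall>x. x \<noteq> 0 \<longrightarrow> x \<bullet> (A *v x) > 0)"

definition stage_cost :: "real^'n^'n \<Rightarrow> real^'m^'m \<Rightarrow> real^'n \<Rightarrow> real^'m \<Rightarrow> real" where
  "stage_cost Q R x u = x \<bullet> (Q *v x) + u \<bullet> (R *v u)"

definition lstar :: "real^'n^'n \<Rightarrow> real^'n \<Rightarrow> real" where
  "lstar Q x = x \<bullet> (Q *v x)"

fun traj :: "(real^'n \<Rightarrow> real^'m \<Rightarrow> real^'n) \<Rightarrow> real^'n \<Rightarrow> (nat \<Rightarrow> real^'m) \<Rightarrow> nat \<Rightarrow> real^'n" where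
  "traj g xh u 0 = xh"
| "traj g xh u (Suc k) = g (traj g xh u k) (u k)"

text \<open>Admissible controls of length N (only the first N entries matter).\<close>
definition adm :: "(real^'m) set \<Rightarrow> nat \<Rightarrow> (nat \<Rightarrow> real^'m) \<Rightarrow> bool" where
  "adm U N u \<longleftrightarrow> (\<forall>k<N. u k \<in> U)"

definition costJ :: "(real^'n \<Rightarrow> real^'m \<Rightarrow> real^'n) \<Rightarrow> real^'n^'n \<Rightarrow> real^'m^'m
    \<Rightarrow> nat \<Rightarrow> real^'n \<Rightarrow> (nat \<Rightarrow> real^'m) \<Rightarrow> real" where
  "costJ g Q R N xh u = (\<Sum>k<N. stage_cost Q R (traj g xh u k) (u k))"

definition valV :: "(real^'n \<Rightarrow> real^'m \<Rightarrow> real^'n) \<Rightarrow> (real^'m) set \<Rightarrow> real^'n^'n \<Rightarrow> real^'m^'m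
    \<Rightarrow> nat \<Rightarrow> real^'n \<Rightarrow> real" where
  "valV g U Q R N xh = Inf {costJ g Q R N xh u | u. adm U N u}"

definition cost_controllable :: "(real^'n \<Rightarrow> real^'m \<Rightarrow> real^'n) \<Rightarrow> (real^'m) set \<Rightarrow> real^'n^'n
    \<Rightarrow> real^'m^'m \<Rightarrow> (real^'n) set \<Rightarrow> (nat \<Rightarrow> real) \<Rightarrow> bool" where
  "cost_controllable g U Q R S B \<longleftrightarrow> mono B \<and> bounded (range B) \<and>
     (\<forall>xh\<in>S. \<exists>u. (\<forall>k. u k \<in> U) \<and> (\<forall>k. traj g xh u k \<in> S) \<and>
        (\<forall>N\<ge>1. valV g U Q R N xh \<le> costJ g Q R N xh u \<and>
                 costJ g Q R N xh u \<le> B N * lstar Q xh))"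

definition msum :: "'a::ab_group_add set \<Rightarrow> 'a set \<Rightarrow> 'a set" where
  "msum A C = {a + c | a c. a \<in> A \<and> c \<in> C}"

definition growth_bounds :: "(real \<Rightarrow> real^'n \<Rightarrow> real^'m \<Rightarrow> real^'n) \<Rightarrow> (real^'m) set \<Rightarrow> real^'n^'n
    \<Rightarrow> real^'m^'m \<Rightarrow> (real^'n) set \<Rightarrow> real \<Rightarrow> nat \<Rightarrow> (nat \<Rightarrow> real) \<Rightarrow> bool" where
  "growth_bounds g U Q R S epsbar Nbar B \<longleftrightarrow>
     (\<exists>Be :: real \<Rightarrow> nat \<Rightarrow> real.
       (\<forall>eps\<in>{0<..epsbar}.
          (\<forall>i j. 1 \<le> i \<longrightarrow> i \<le> j \<longrightarrow> j \<le> Nbar \<longrightarrow> Be eps i \<le> Be eps j) \<and>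
          (\<forall>xh\<in>S. \<forall>N\<in>{1..Nbar}. \<exists>u. adm U N u \<and>
              valV (g eps) U Q R N xh \<le> costJ (g eps) Q R N xh u \<and>
              costJ (g eps) Q R N xh u \<le> Be eps N * lstar Q xh)) \<and>
       (\<forall>N\<in>{1..Nbar}. ((\<lambda>eps. Be eps N) \<longlongrightarrow> B N) (at_right 0)))"

end

theory Submission
  imports Defs
begin

text \<open>
  Apply the control sequence witnessing cost controllability of one model to the other one.
  As the stage cost is coercive, the cost bound over the horizon \<open>Nbar\<close> bounds every state
  and control by \<open>c |x|\<close>. The deviation of the two trajectories satisfies
  \<open>e(k+1) \<le> L e(k) + \<delta>\<close>, where \<open>\<delta>\<close> bounds the one-step model error along the controlled
  trajectory, hence \<open>e(k) \<le> (1 + L + \<dots> + L\<^sup>k\<^sup>-\<^sup>1) \<delta>\<close>. Taking the uniform error \<open>\<eta>\<close> for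
  \<open>\<delta>\<close> keeps the perturbed trajectory inside \<open>Omega\<close>, where the Lipschitz and error bounds
  hold; then the proportional error gives \<open>e(k) \<le> E |x|\<close> with \<open>E = O(c\<^sub>x + c\<^sub>u)\<close>.
  Expanding the quadratic stage cost, the costs over \<open>N\<close> steps differ by at most
  \<open>N K E (2c + E) |x|\<^sup>2\<close>, \<open>K\<close> a bound for the bilinear form of \<open>Q\<close>; this is
  \<open>O(E) \<ell>\<^sup>\<star>(x)\<close>, and \<open>E \<rightarrow> 0\<close> as \<open>\<epsilon> \<rightarrow> 0\<close>.
\<close>

lemma pos_def_sym_nonneg:
  assumes "pos_def_sym A"
  shows "0 \<le> x \<bullet> (A *v x)"
  using assms unfolding pos_def_sym_def by (cases "x = 0") (auto intro: less_imp_le)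

lemma pos_def_sym_coercive:
  fixes A :: "real^'n^'n"
  assumes "pos_def_sym A"
  obtains lam where "lam > 0" "\<And>x. lam * (norm x)^2 \<le> x \<bullet> (A *v x)"
proof -
  let ?q = "\<lambda>x::real^'n. x \<bullet> (A *v x)"
  let ?S = "sphere (0::real^'n) 1"
  have "continuous_on ?S ?q"
    by (intro continuous_intros bounded_linear.continuous_on[OF matrix_vector_mul_bounded_linear])
  moreover have "?S \<noteq> {}" by (simp add: sphere_eq_empty)
  ultimately obtain x0 where x0: "x0 \<in> ?S" "\<And>y. y \<in> ?S \<Longrightarrow> ?q x0 \<le> ?q y"
    using continuous_attains_inf[OF compact_sphere] by blast
  then have "x0 \<noteq> 0" by auto
  then have "?q x0 > 0" using assms unfolding pos_def_sym_def by blast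
  moreover have "?q x0 * (norm x)^2 \<le> ?q x" for x
  proof (cases "x = 0")
    case False
    let ?y = "(1 / norm x) *\<^sub>R x"
    have "?q x0 \<le> ?q ?y" using False by (intro x0(2)) simp
    also have "?q ?y = ?q x / (norm x)^2"
      by (simp add: matrix_vector_mult_scaleR power2_eq_square)
    finally show ?thesis using False by (simp add: field_simps)
  qed simp
  ultimately show ?thesis using that by blast
qed

lemma pos_def_sym_common_coercive:
  fixes Q :: "real^'n^'n" and R :: "real^'m^'m"
  assumes "pos_def_sym Q" "pos_def_sym R"
  obtains lam where "lam > 0" "\<And>x. lam * (norm x)^2 \<le> x \<bullet> (Q *v x)"
    "\<And>v. lam * (norm v)^2 \<le> v \<bullet> (R *v v)"
proof -
  obtain lamQ where "lamQ > 0" "\<And>x. lamQ * (norm x)^2 \<le> x \<bullet> (Q *v x)"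
    using pos_def_sym_coercive[OF assms(1)] by blast
  moreover obtain lamR where "lamR > 0" "\<And>v. lamR * (norm v)^2 \<le> v \<bullet> (R *v v)"
    using pos_def_sym_coercive[OF assms(2)] by blast
  ultimately show ?thesis
    using that[of "min lamQ lamR"]
    by (meson min_less_iff_conj order.trans mult_right_mono min.cobounded1 min.cobounded2
        zero_le_power2)
qed

lemma matrix_bilinear_bound:
  fixes A :: "real^'n^'m"
  obtains K where "K \<ge> 0" "\<And>x y. \<bar>x \<bullet> (A *v y)\<bar> \<le> K * norm x * norm y"
proof -
  obtain K where K: "K > 0" "\<And>y. norm (A *v y) \<le> norm y * K"
    using bounded_linear.pos_bounded[OF matrix_vector_mul_bounded_linear[of A]] by blast
  have "\<bar>x \<bullet> (A *v y)\<bar> \<le> K * norm x * norm y" for x y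
  proof -
    have "\<bar>x \<bullet> (A *v y)\<bar> \<le> norm x * norm (A *v y)" by (rule Cauchy_Schwarz_ineq2)
    also have "\<dots> \<le> norm x * (norm y * K)" by (simp add: K(2) mult_left_mono)
    finally show ?thesis by (simp add: algebra_simps)
  qed
  with K show ?thesis using that[of K] by auto
qed

lemma quadratic_form_add_le:
  fixes A :: "real^'n^'n"
  assumes "\<And>x y. \<bar>x \<bullet> (A *v y)\<bar> \<le> K * norm x * norm y"
  shows "(x + e) \<bullet> (A *v (x + e)) \<le> x \<bullet> (A *v x) + K * norm e * (2 * norm x + norm e)"
proof -
  have "(x + e) \<bullet> (A *v (x + e)) = x \<bullet> (A *v x) + x \<bullet> (A *v e) + e \<bullet> (A *v x) + e \<bullet> (A *v e)"
    by (simp add: matrix_vector_right_distrib inner_add_left inner_add_right)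
  moreover have "x \<bullet> (A *v e) \<le> K * norm x * norm e" "e \<bullet> (A *v x) \<le> K * norm e * norm x"
    "e \<bullet> (A *v e) \<le> K * norm e * norm e"
    using assms by (meson abs_le_D1)+
  ultimately show ?thesis by (simp add: algebra_simps)
qed

lemma stage_cost_nonneg:
  assumes "pos_def_sym Q" "pos_def_sym R"
  shows "0 \<le> stage_cost Q R x u"
  using pos_def_sym_nonneg[OF assms(1)] pos_def_sym_nonneg[OF assms(2)]
  unfolding stage_cost_def by (simp add: add_nonneg_nonneg)

lemma costJ_nonneg:
  assumes "pos_def_sym Q" "pos_def_sym R"
  shows "0 \<le> costJ g Q R N xh u"
  unfolding costJ_def by (intro sum_nonneg stage_cost_nonneg[OF assms])

lemma valV_le_costJ:
  assumes "pos_def_sym Q" "pos_def_sym R" "adm U N u"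
  shows "valV g U Q R N xh \<le> costJ g Q R N xh u"
  unfolding valV_def
  by (rule cInf_lower) (use assms costJ_nonneg in \<open>auto intro!: bdd_belowI[of _ 0]\<close>)

lemma stage_cost_le_costJ:
  assumes "pos_def_sym Q" "pos_def_sym R" "k < N"
  shows "stage_cost Q R (traj g xh u k) (u k) \<le> costJ g Q R N xh u"
  unfolding costJ_def using assms(3) by (intro member_le_sum stage_cost_nonneg[OF assms(1,2)]) auto

lemma le_sqrt_mult_if_square_le:
  fixes t a C lam :: real
  assumes "lam > 0" "a \<ge> 0" "lam * t^2 \<le> C * a^2"
  shows "t \<le> sqrt (C / lam) * a"
proof -
  have "t^2 \<le> C / lam * a^2" using assms(1,3) by (simp add: field_simps mult.commute)
  then have "sqrt (t^2) \<le> sqrt (C / lam * a^2)" by (rule real_sqrt_le_mono)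
  also have "\<dots> = sqrt (C / lam) * a" using assms(2) by (subst real_sqrt_mult) simp
  finally show ?thesis by simp
qed

lemma traj_control_norm_le_of_costJ:
  assumes QR: "pos_def_sym Q" "pos_def_sym R"
    and lam: "lam > 0" "\<And>x. lam * (norm x)^2 \<le> x \<bullet> (Q *v x)"
      "\<And>v. lam * (norm v)^2 \<le> v \<bullet> (R *v v)"
    and K: "\<And>x. lstar Q x \<le> K * (norm x)^2"
    and cost: "costJ g Q R N xh u \<le> B * lstar Q xh"
    and k: "k < N"
  shows "norm (traj g xh u k) \<le> sqrt (max B 0 * K / lam) * norm xh"
    and "norm (u k) \<le> sqrt (max B 0 * K / lam) * norm xh"
proof -
  let ?x = "traj g xh u k"
  have "stage_cost Q R ?x (u k) \<le> B * lstar Q xh"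
    using stage_cost_le_costJ[OF QR k] cost by (rule order.trans)
  also have "\<dots> \<le> max B 0 * lstar Q xh"
    using pos_def_sym_nonneg[OF QR(1)] unfolding lstar_def by (intro mult_right_mono) auto
  also have "\<dots> \<le> max B 0 * K * (norm xh)^2"
    using K by (simp add: mult.assoc mult_left_mono)
  finally have stage: "stage_cost Q R ?x (u k) \<le> max B 0 * K * (norm xh)^2" .
  have "lam * (norm ?x)^2 \<le> stage_cost Q R ?x (u k)"
    using lam(2) pos_def_sym_nonneg[OF QR(2)] unfolding stage_cost_def by (smt (verit))
  with stage show "norm ?x \<le> sqrt (max B 0 * K / lam) * norm xh"
    by (intro le_sqrt_mult_if_square_le lam(1)) auto
  have "lam * (norm (u k))^2 \<le> stage_cost Q R ?x (u k)"
    using lam(3) pos_def_sym_nonneg[OF QR(1)] unfolding stage_cost_def by (smt (verit))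
  with stage show "norm (u k) \<le> sqrt (max B 0 * K / lam) * norm xh"
    by (intro le_sqrt_mult_if_square_le lam(1)) auto
qed

lemma msum_cball_memI:
  assumes "x \<in> S" "norm e \<le> r"
  shows "x + e \<in> msum S (cball 0 r)"
  using assms unfolding msum_def by auto

lemma geometric_sum_Suc: "(\<Sum>i<Suc k. (L::real)^i) = 1 + L * (\<Sum>i<k. L^i)"
  by (subst sum.lessThan_Suc_shift) (simp add: sum_distrib_left)

lemma traj_deviation_le:
  fixes g1 g2 :: "real^'n \<Rightarrow> real^'m \<Rightarrow> real^'n"
  assumes L: "L \<ge> 0" "\<forall>x\<in>Omega. \<forall>y\<in>Omega. \<forall>v\<in>U. norm (g2 x v - g2 y v) \<le> L * norm (x - y)"
    and mem: "\<forall>j<k. u j \<in> U \<and> traj g1 xh u j \<in> Omega \<and> traj g2 xh u j \<in> Omega"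
    and err: "\<forall>j<k. norm (g1 (traj g1 xh u j) (u j) - g2 (traj g1 xh u j) (u j)) \<le> \<delta>"
  shows "norm (traj g2 xh u k - traj g1 xh u k) \<le> (\<Sum>i<k. L^i) * \<delta>"
  using mem err
proof (induction k)
  case (Suc k)
  let ?x = "traj g1 xh u k" and ?y = "traj g2 xh u k"
  have "norm (traj g2 xh u (Suc k) - traj g1 xh u (Suc k))
      = norm ((g2 ?y (u k) - g2 ?x (u k)) - (g1 ?x (u k) - g2 ?x (u k)))"
    by (simp add: algebra_simps)
  also have "\<dots> \<le> norm (g2 ?y (u k) - g2 ?x (u k)) + norm (g1 ?x (u k) - g2 ?x (u k))"
    by (rule norm_triangle_ineq4)
  also have "\<dots> \<le> L * norm (?y - ?x) + \<delta>"
    using L(2) Suc.prems by (intro add_mono) auto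
  also have "\<dots> \<le> L * ((\<Sum>i<k. L^i) * \<delta>) + \<delta>"
    using Suc by (intro add_right_mono mult_left_mono L(1)) auto
  finally show ?case unfolding geometric_sum_Suc by (simp add: algebra_simps)
qed simp

lemma traj_mem_of_uniform_error:
  fixes g1 g2 :: "real^'n \<Rightarrow> real^'m \<Rightarrow> real^'n"
  assumes L: "L \<ge> 0" "\<forall>x\<in>Omega. \<forall>y\<in>Omega. \<forall>v\<in>U. norm (g2 x v - g2 y v) \<le> L * norm (x - y)"
    and err: "\<eta> \<ge> 0" "\<forall>x\<in>Omega. \<forall>v\<in>U. norm (g1 x v - g2 x v) \<le> \<eta>"
    and incl: "msum S (cball 0 ((\<Sum>i<N. L^i) * \<eta>)) \<subseteq> Omega"
    and u: "\<forall>j<N. u j \<in> U" "\<forall>j<N. traj g1 xh u j \<in> S"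
    and k: "k < N"
  shows "traj g2 xh u k \<in> Omega"
  using k
proof (induction k rule: less_induct)
  case (less k)
  have r_nonneg: "0 \<le> (\<Sum>i<N. L^i) * \<eta>"
    using L(1) err(1) by (simp add: sum_nonneg)
  have S_sub: "x \<in> Omega" if "x \<in> S" for x
    using msum_cball_memI[OF that, of 0] r_nonneg incl by auto
  let ?e = "traj g2 xh u k - traj g1 xh u k"
  have "norm ?e \<le> (\<Sum>i<k. L^i) * \<eta>"
    using less u err(2) S_sub by (intro traj_deviation_le[OF L]) auto
  also have "\<dots> \<le> (\<Sum>i<N. L^i) * \<eta>"
    using less.prems L(1) err(1) by (intro mult_right_mono sum_mono2) auto
  finally have "traj g1 xh u k + ?e \<in> msum S (cball 0 ((\<Sum>i<N. L^i) * \<eta>))"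
    using u(2) less.prems by (intro msum_cball_memI) auto
  then show ?case using incl by auto
qed

lemma traj_deviation_le_proportional:
  fixes g1 g2 :: "real^'n \<Rightarrow> real^'m \<Rightarrow> real^'n"
  assumes L: "L \<ge> 0" "\<forall>x\<in>Omega. \<forall>y\<in>Omega. \<forall>v\<in>U. norm (g2 x v - g2 y v) \<le> L * norm (x - y)"
    and err: "cx \<ge> 0" "cu \<ge> 0" "\<eta> \<ge> 0"
      "\<forall>x\<in>Omega. \<forall>v\<in>U. norm (g1 x v - g2 x v) \<le> cx * norm x + cu * norm v"
      "\<forall>x\<in>Omega. \<forall>v\<in>U. norm (g1 x v - g2 x v) \<le> \<eta>"
    and incl: "msum S (cball 0 ((\<Sum>i<N. L^i) * \<eta>)) \<subseteq> Omega"
    and u: "\<forall>j<N. u j \<in> U" "\<forall>j<N. traj g1 xh u j \<in> S"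
    and bound: "c \<ge> 0"
      "\<forall>j<N. norm (traj g1 xh u j) \<le> c * norm xh \<and> norm (u j) \<le> c * norm xh"
    and k: "k < N"
  shows "norm (traj g2 xh u k - traj g1 xh u k) \<le> (\<Sum>i<N. L^i) * (cx + cu) * c * norm xh"
proof -
  have S_sub: "x \<in> Omega" if "x \<in> S" for x
    using msum_cball_memI[OF that, of 0] L(1) err(3) incl by (auto simp: sum_nonneg)
  have "norm (g1 (traj g1 xh u j) (u j) - g2 (traj g1 xh u j) (u j)) \<le> (cx + cu) * c * norm xh"
    if "j < N" for j
  proof -
    have "norm (g1 (traj g1 xh u j) (u j) - g2 (traj g1 xh u j) (u j))
        \<le> cx * norm (traj g1 xh u j) + cu * norm (u j)"
      using err(4) u S_sub that by auto
    also have "\<dots> \<le> cx * (c * norm xh) + cu * (c * norm xh)"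
      using bound(2) that err(1,2) by (intro add_mono mult_left_mono) auto
    finally show ?thesis by (simp add: algebra_simps)
  qed
  then have "norm (traj g2 xh u k - traj g1 xh u k) \<le> (\<Sum>i<k. L^i) * ((cx + cu) * c * norm xh)"
    using k u S_sub traj_mem_of_uniform_error[OF L err(3,5) incl u]
    by (intro traj_deviation_le[OF L]) auto
  also have "\<dots> \<le> (\<Sum>i<N. L^i) * ((cx + cu) * c * norm xh)"
    using k L(1) err(1,2) bound(1) by (intro mult_right_mono sum_mono2) auto
  finally show ?thesis by (simp add: mult.assoc)
qed

lemma costJ_perturbation_le:
  fixes g1 g2 :: "real^'n \<Rightarrow> real^'m \<Rightarrow> real^'n"
  assumes K: "K \<ge> 0" "\<And>x y. \<bar>x \<bullet> (Q *v y)\<bar> \<le> K * norm x * norm y"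
    and "c \<ge> 0" "E \<ge> 0"
    and x: "\<forall>k<N. norm (traj g1 xh u k) \<le> c * norm xh"
    and e: "\<forall>k<N. norm (traj g2 xh u k - traj g1 xh u k) \<le> E * norm xh"
  shows "costJ g2 Q R N xh u \<le> costJ g1 Q R N xh u + N * (K * E * (2 * c + E)) * (norm xh)^2"
proof -
  have "stage_cost Q R (traj g2 xh u k) (u k)
      \<le> stage_cost Q R (traj g1 xh u k) (u k) + K * E * (2 * c + E) * (norm xh)^2"
    if k: "k < N" for k
  proof -
    let ?x = "traj g1 xh u k" and ?e = "traj g2 xh u k - traj g1 xh u k"
    have "(?x + ?e) \<bullet> (Q *v (?x + ?e)) \<le> ?x \<bullet> (Q *v ?x) + K * norm ?e * (2 * norm ?x + norm ?e)"
      by (rule quadratic_form_add_le[OF K(2)])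
    also have "K * norm ?e * (2 * norm ?x + norm ?e)
        \<le> K * (E * norm xh) * (2 * (c * norm xh) + E * norm xh)"
      using K(1) x e k by (intro mult_mono add_mono) auto
    finally show ?thesis unfolding stage_cost_def by (simp add: power2_eq_square algebra_simps)
  qed
  then have "costJ g2 Q R N xh u
      \<le> (\<Sum>k<N. stage_cost Q R (traj g1 xh u k) (u k) + K * E * (2 * c + E) * (norm xh)^2)"
    unfolding costJ_def by (intro sum_mono) auto
  then show ?thesis unfolding costJ_def by (simp add: sum.distrib)
qed

lemma costJ_le_of_model_error:
  fixes g1 g2 :: "real^'n \<Rightarrow> real^'m \<Rightarrow> real^'n"
  assumes QR: "pos_def_sym Q" "pos_def_sym R"
    and lam: "lam > 0" "\<And>x. lam * (norm x)^2 \<le> x \<bullet> (Q *v x)"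
      "\<And>v. lam * (norm v)^2 \<le> v \<bullet> (R *v v)"
    and K: "K \<ge> 0" "\<And>x y. \<bar>x \<bullet> (Q *v y)\<bar> \<le> K * norm x * norm y"
    and L: "L \<ge> 0"
      "\<forall>x\<in>Omega. \<forall>y\<in>Omega. \<forall>v\<in>U. norm (g2 x v - g2 y v) \<le> L * norm (x - y)"
    and err: "cx \<ge> 0" "cu \<ge> 0" "\<eta> \<ge> 0"
      "\<forall>x\<in>Omega. \<forall>v\<in>U. norm (g1 x v - g2 x v) \<le> cx * norm x + cu * norm v"
      "\<forall>x\<in>Omega. \<forall>v\<in>U. norm (g1 x v - g2 x v) \<le> \<eta>"
    and incl: "msum S (cball 0 ((\<Sum>i<Nbar. L^i) * \<eta>)) \<subseteq> Omega"
    and u: "\<forall>k. u k \<in> U" "\<forall>k. traj g1 xh u k \<in> S"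
    and cost: "\<And>N. N \<ge> 1 \<Longrightarrow> costJ g1 Q R N xh u \<le> B N * lstar Q xh"
    and N: "1 \<le> N" "N \<le> Nbar"
  defines "c \<equiv> sqrt (max (B Nbar) 0 * K / lam)"
    and "E \<equiv> (\<Sum>i<Nbar. L^i) * (cx + cu) * sqrt (max (B Nbar) 0 * K / lam)"
  shows "costJ g2 Q R N xh u \<le> (B N + N * (K * E * (2 * c + E)) / lam) * lstar Q xh"
proof -
  have c: "c \<ge> 0" using K(1) lam(1) unfolding c_def by simp
  have E_eq: "E = (\<Sum>i<Nbar. L^i) * (cx + cu) * c" unfolding E_def c_def ..
  have E: "E \<ge> 0" using L(1) err(1,2) c unfolding E_eq by (simp add: sum_nonneg)
  have "lstar Q x \<le> K * (norm x)^2" for x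
    using K(2)[of x x] unfolding lstar_def power2_eq_square by (simp add: mult.assoc)
  then have state: "\<forall>k<Nbar. norm (traj g1 xh u k) \<le> c * norm xh \<and> norm (u k) \<le> c * norm xh"
    using traj_control_norm_le_of_costJ[OF QR lam, of K g1 Nbar xh u "B Nbar"] cost N
    unfolding c_def by auto
  have "\<forall>k<Nbar. norm (traj g2 xh u k - traj g1 xh u k) \<le> E * norm xh"
    unfolding E_eq using traj_deviation_le_proportional[OF L err incl _ _ c state] u by auto
  then have "costJ g2 Q R N xh u \<le> costJ g1 Q R N xh u + N * (K * E * (2 * c + E)) * (norm xh)^2"
    using N state c E by (intro costJ_perturbation_le[OF K]) auto
  also have "\<dots> \<le> B N * lstar Q xh + N * (K * E * (2 * c + E)) * (lstar Q xh / lam)"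
    using cost N lam(1) lam(2)[of xh] K(1) c E
    by (intro add_mono mult_left_mono) (auto simp: lstar_def field_simps)
  also have "\<dots> = (B N + N * (K * E * (2 * c + E)) / lam) * lstar Q xh"
    by (simp add: field_simps)
  finally show ?thesis .
qed

lemma growth_bounds_of_model_error:
  fixes ga gb :: "real \<Rightarrow> real^'n \<Rightarrow> real^'m \<Rightarrow> real^'n"
    and cx cu eta :: "real \<Rightarrow> real"
  assumes QR: "pos_def_sym Q" "pos_def_sym R"
    and epsbar: "epsbar > 0"
    and EB_nonneg: "\<forall>eps\<in>{0<..epsbar}. cx eps \<ge> 0 \<and> cu eps \<ge> 0 \<and> eta eps \<ge> 0"
    and EB_lim: "((\<lambda>eps. max (cx eps) (max (cu eps) (eta eps))) \<longlongrightarrow> 0) (at_right 0)"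
    and EB_prop: "\<forall>eps\<in>{0<..epsbar}. \<forall>x\<in>Omega. \<forall>v\<in>U.
      norm (ga eps x v - gb eps x v) \<le> cx eps * norm x + cu eps * norm v"
    and EB_unif: "\<forall>eps\<in>{0<..epsbar}. \<forall>x\<in>Omega. \<forall>v\<in>U.
      norm (ga eps x v - gb eps x v) \<le> eta eps"
    and L: "L \<ge> 0" "\<forall>eps\<in>{0<..epsbar}. \<forall>x\<in>Omega. \<forall>y\<in>Omega. \<forall>v\<in>U.
      norm (gb eps x v - gb eps y v) \<le> L * norm (x - y)"
    and incl: "\<forall>eps\<in>{0<..epsbar}. msum S (cball 0 ((\<Sum>i<Nbar. L^i) * eta eps)) \<subseteq> Omega"
    and cc: "\<forall>eps\<in>{0<..epsbar}. cost_controllable (ga eps) U Q R S B"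
  shows "growth_bounds gb U Q R S epsbar Nbar B"
proof -
  obtain lam where lam: "lam > 0" "\<And>x. lam * (norm x)^2 \<le> x \<bullet> (Q *v x)"
    "\<And>v. lam * (norm v)^2 \<le> v \<bullet> (R *v v)"
    using pos_def_sym_common_coercive[OF QR] by blast
  obtain K where K: "K \<ge> 0" "\<And>x y. \<bar>x \<bullet> (Q *v y)\<bar> \<le> K * norm x * norm y"
    using matrix_bilinear_bound by blast
  define c where "c = sqrt (max (B Nbar) 0 * K / lam)"
  define E where "E eps = (\<Sum>i<Nbar. L^i) * (cx eps + cu eps) * c" for eps
  define Be where "Be eps N = B N + N * (K * E eps * (2 * c + E eps)) / lam" for eps N
  have bound: "\<exists>u. adm U N u \<and> valV (gb eps) U Q R N xh \<le> costJ (gb eps) Q R N xh u \<and>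
      costJ (gb eps) Q R N xh u \<le> Be eps N * lstar Q xh"
    if eps: "eps \<in> {0<..epsbar}" and "xh \<in> S" "N \<in> {1..Nbar}" for eps xh N
  proof -
    obtain u where u: "\<forall>k. u k \<in> U" "\<forall>k. traj (ga eps) xh u k \<in> S"
      and cost: "\<And>N. N \<ge> 1 \<Longrightarrow> costJ (ga eps) Q R N xh u \<le> B N * lstar Q xh"
      using cc eps \<open>xh \<in> S\<close> unfolding cost_controllable_def by blast
    have "costJ (gb eps) Q R N xh u \<le> Be eps N * lstar Q xh"
      unfolding Be_def E_def c_def
      using costJ_le_of_model_error[where Omega = Omega and S = S and \<eta> = "eta eps",
          OF QR lam K L(1) _ _ _ _ _ _ _ u cost] L(2) EB_nonneg EB_prop EB_unif incl eps
        \<open>N \<in> {1..Nbar}\<close>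
      by auto
    then show ?thesis
      using valV_le_costJ[OF QR] u(1) unfolding adm_def by blast
  qed
  have Be_mono: "Be eps i \<le> Be eps j" if "eps \<in> {0<..epsbar}" "i \<le> j" for eps i j
  proof -
    have "mono B" using cc that(1) unfolding cost_controllable_def by blast
    moreover have "c \<ge> 0" "E eps \<ge> 0"
      using K(1) lam(1) L(1) EB_nonneg that(1) unfolding c_def E_def by (auto simp: sum_nonneg)
    ultimately show ?thesis unfolding Be_def using that lam(1) K(1)
      by (intro add_mono divide_right_mono mult_right_mono) (auto simp: monoD)
  qed
  have "((\<lambda>eps. Be eps N) \<longlongrightarrow> B N) (at_right 0)" for N
  proof -
    have eventually_nonneg: "\<forall>\<^sub>F eps in at_right 0. cx eps \<ge> 0 \<and> cu eps \<ge> 0"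
      using EB_nonneg epsbar unfolding eventually_at_right_field by (intro exI[of _ epsbar]) auto
    have "(cx \<longlongrightarrow> 0) (at_right 0)" "(cu \<longlongrightarrow> 0) (at_right 0)"
      by (rule Lim_null_comparison[OF eventually_mono[OF eventually_nonneg] EB_lim]; simp)+
    then have "(E \<longlongrightarrow> (\<Sum>i<Nbar. L^i) * (0 + 0) * c) (at_right 0)"
      unfolding E_def by (intro tendsto_intros)
    then have "((\<lambda>eps. Be eps N) \<longlongrightarrow> B N + N * (K * 0 * (2 * c + 0)) / lam) (at_right 0)"
      unfolding Be_def using lam(1) by (intro tendsto_intros) auto
    then show ?thesis by simp
  qed
  then show ?thesis
    unfolding growth_bounds_def using bound Be_mono by (intro exI[of _ Be]) blast
qed

theorem mainTheorem1:
  fixes f :: "real^'n \<Rightarrow> real^'m \<Rightarrow> real^'n"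
    and fe :: "real \<Rightarrow> real^'n \<Rightarrow> real^'m \<Rightarrow> real^'n"
    and U :: "(real^'m) set" and Q :: "real^'n^'n" and R :: "real^'m^'m"
    and S Omega :: "(real^'n) set"
    and epsbar Lf Lbar :: real and Nbar :: nat
    and cx cu eta :: "real \<Rightarrow> real"
  assumes U: "convex U" "compact U" "0 \<in> interior U"
    and f_cont: "continuous_on (UNIV \<times> U) (\<lambda>(x,u). f x u)" and f0: "f 0 0 = 0"
    and QR: "pos_def_sym Q" "pos_def_sym R"
    and epsbar: "epsbar > 0"
    and S0: "0 \<in> interior S"
    and Omega0: "0 \<in> interior Omega"
    and EB_nonneg: "\<forall>eps\<in>{0<..epsbar}. cx eps \<ge> 0 \<and> cu eps \<ge> 0 \<and> eta eps \<ge> 0"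
    and EB_lim: "((\<lambda>eps. max (cx eps) (max (cu eps) (eta eps))) \<longlongrightarrow> 0) (at_right 0)"
    and EB_prop: "\<forall>eps\<in>{0<..epsbar}. \<forall>x\<in>Omega. \<forall>u\<in>U.
                    norm (f x u - fe eps x u) \<le> cx eps * norm x + cu eps * norm u"
    and EB_unif: "\<forall>eps\<in>{0<..epsbar}. \<forall>x\<in>Omega. \<forall>u\<in>U. norm (f x u - fe eps x u) \<le> eta eps"
    and L_nonneg: "Lf \<ge> 0" "Lbar \<ge> 0"
    and L_f: "\<forall>x\<in>Omega. \<forall>y\<in>Omega. \<forall>u\<in>U. norm (f x u - f y u) \<le> Lf * norm (x - y)"
    and L_fe: "\<forall>eps\<in>{0<..epsbar}. \<exists>Le. Le \<le> Lbar \<and>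
                 (\<forall>x\<in>Omega. \<forall>y\<in>Omega. \<forall>u\<in>U. norm (fe eps x u - fe eps y u) \<le> Le * norm (x - y))"
    and Nbar: "Nbar \<ge> 1"
  shows
    "(\<forall>B. cost_controllable f U Q R S B \<and>
          (\<forall>eps\<in>{0<..epsbar}. msum S (cball 0 ((\<Sum>i<Nbar. Lbar ^ i) * eta eps)) \<subseteq> Omega)
        \<longrightarrow> growth_bounds fe U Q R S epsbar Nbar B)
   \<and> (\<forall>B. (\<forall>eps\<in>{0<..epsbar}. cost_controllable (fe eps) U Q R S B) \<and>
          (\<forall>eps\<in>{0<..epsbar}. msum S (cball 0 ((\<Sum>i<Nbar. Lf ^ i) * eta eps)) \<subseteq> Omega)
        \<longrightarrow> growth_bounds (\<lambda>_. f) U Q R S epsbar Nbar B)"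
proof -
  have fe_lipschitz: "\<forall>eps\<in>{0<..epsbar}. \<forall>x\<in>Omega. \<forall>y\<in>Omega. \<forall>v\<in>U.
      norm (fe eps x v - fe eps y v) \<le> Lbar * norm (x - y)"
  proof (intro ballI)
    fix eps x y v assume "eps \<in> {0<..epsbar}" "x \<in> Omega" "y \<in> Omega" "v \<in> U"
    moreover obtain Le where "Le \<le> Lbar"
      "\<forall>x\<in>Omega. \<forall>y\<in>Omega. \<forall>v\<in>U. norm (fe eps x v - fe eps y v) \<le> Le * norm (x - y)"
      using L_fe calculation(1) by blast
    ultimately show "norm (fe eps x v - fe eps y v) \<le> Lbar * norm (x - y)"
      by (meson mult_right_mono norm_ge_zero order.trans)
  qed
  have "growth_bounds fe U Q R S epsbar Nbar B"
    if "cost_controllable f U Q R S B"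
      "\<forall>eps\<in>{0<..epsbar}. msum S (cball 0 ((\<Sum>i<Nbar. Lbar ^ i) * eta eps)) \<subseteq> Omega" for B
    using growth_bounds_of_model_error[where ga = "\<lambda>_. f", OF QR epsbar EB_nonneg EB_lim _ _
        L_nonneg(2) fe_lipschitz] that EB_prop EB_unif
    by simp
  moreover have "growth_bounds (\<lambda>_. f) U Q R S epsbar Nbar B"
    if "\<forall>eps\<in>{0<..epsbar}. cost_controllable (fe eps) U Q R S B"
      "\<forall>eps\<in>{0<..epsbar}. msum S (cball 0 ((\<Sum>i<Nbar. Lf ^ i) * eta eps)) \<subseteq> Omega" for B
    using growth_bounds_of_model_error[where gb = "\<lambda>_. f", OF QR epsbar EB_nonneg EB_lim _ _
        L_nonneg(1)] that EB_prop EB_unif L_f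
    by (simp add: norm_minus_commute)
  ultimately show ?thesis by blast
qed

end
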